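(* Suppose $\mathrm{char}\,\mathbb{F}=2$ and let $C$ be an $A$-code of length $2$ with canonical generator matrix $\begin{pmatrix}g_1&g_2\\0&g_3\end{pmatrix}$, where $g_1,g_3$ are nonzero monic divisors of $f$, $g_3\mid (f/g_1)g_2$ in $\mathbb{F}[x]$ and $\deg g_2<\deg g_3$. Then $C$ is self-dual ($C=C^\perp$) if and only if either (i) $g_1=g_3$, $g_2=0$ and $f=g_1^2$; or (ii) $f=g_1^2f'$, $g_3=g_1f'$ and $g_2=g_1\bigl(h\sqrt[2]{f'}+1\bigr)$ for some $f',h\in\mathbb{F}[x]$ with $\deg h<\deg f'-\deg\sqrt[2]{f'}$.
   Context: Let $\mathbb{F}$ be a finite field, $f(x)\in\mathbb{F}[x]$ monic of degree $m$, $A=\mathbb{F}[x]/\langle f(x)\rangle$, elements identified with polynomials of degree $<m$. An $A$-code of length $l$ is an $A$-submodule of $A^l$; $C^\perp=\{a\in A^l:\sum_ia_ic_i=0\ \forall c\in C\}$. The canonical generator matrix (CGM) of a nonzero $A$-code $C$ is the unique matrix over $A$ whose rows generate $C$, are monic with strictly increasing leading indices (position of first nonzero entry), have leading entries dividing $f$, satisfy that $(f/L_i)\cdot(\text{row }i)$ is an $A$-combination of later rows ($L_i$ the leading entry of row $i$), and such that every entry above a leading entry has smaller degree than it. For $h\in\mathbb{F}[x]$ with prime factorization $h=p_1^{a_1}\cdots p_t^{a_t}$ (monic irreducible $p_i$), $\sqrt[2]{h}=p_1^{\lceil a_1/2\rceil}\cdots p_t^{\lceil a_t/2\rceil}$.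 *)

theory Defs
  imports "HOL-Computational_Algebra.Computational_Algebra"
begin

text \<open>Elements of A = F[x]/(f) are identified with their reduced representatives
  (polynomials p with p mod f = p, i.e. of degree < deg f).\<close>

definition A_elems :: "'a::field poly \<Rightarrow> 'a poly set" where
  "A_elems f = {p. p mod f = p}"

definition code2 :: "'a::field poly \<Rightarrow> 'a poly \<Rightarrow> 'a poly \<Rightarrow> 'a poly \<Rightarrow> ('a poly \<times> 'a poly) set" where
  "code2 f g1 g2 g3 =
     {((u * g1) mod f, (u * g2 + v * g3) mod f) | u v. u \<in> A_elems f \<and> v \<in> A_elems f}"

definition dual2 :: "'a::field poly \<Rightarrow> ('a poly \<times> 'a poly) set \<Rightarrow> ('a poly \<times> 'a poly) set" where
  "dual2 f C = {(a, b). a \<in> A_elems f \<and> b \<in> A_elems f \<and>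
                   (\<forall>(c1, c2) \<in> C. (a * c1 + b * c2) mod f = 0)}"

definition sqrt2 :: "'a::field_gcd poly \<Rightarrow> 'a poly" where
  "sqrt2 h = (\<Prod>p\<in>prime_factors h. p ^ ((multiplicity p h + 1) div 2))"

end

theory Submission
  imports Defs
begin

text \<open>Self-orthogonality says exactly that \<open>f\<close> divides \<open>g1\<^sup>2 + g2\<^sup>2\<close>,
  \<open>g2 g3\<close> and \<open>g3\<^sup>2\<close>. The reverse inclusion, tested on a few words of
  \<open>C\<^sup>\<perp>\<close> whose first (resp. second) component would have to be a multiple of
  \<open>g1\<close> (resp. \<open>g3\<close>) in \<open>C\<close>, forces \<open>f = g1\<^sup>2 f'\<close>, \<open>g3 = g1 f'\<close> and
  \<open>g2 = g1 m\<close>; self-orthogonality then reduces to \<open>f' | 1 + m\<^sup>2\<close>. In characteristic 2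
  we have \<open>1 + m\<^sup>2 = (m + 1)\<^sup>2\<close>, and \<open>f' | q\<^sup>2\<close> holds iff \<open>sqrt2 f' | q\<close>, so the
  condition reads \<open>m = h sqrt2 f' + 1\<close>; the bound on \<open>deg h\<close> is \<open>deg g2 < deg g3\<close>, and
  \<open>m = 0\<close> (which forces \<open>f' = 1\<close>) is case (i).\<close>

lemma add_self_CHAR_2:
  assumes "CHAR('a::ring_1) = 2"
  shows "(x::'a) + x = 0"
  using minus_CHAR_2[OF assms, of x x] by simp

lemma square_add_CHAR_2:
  assumes "CHAR('a::comm_ring_1) = 2"
  shows "((x::'a) + y) ^ 2 = x ^ 2 + y ^ 2"
proof -
  have "(x + y) ^ 2 = x ^ 2 + y ^ 2 + (x * y + x * y)"
    by (simp add: power2_eq_square algebra_simps)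
  then show ?thesis
    using add_self_CHAR_2[OF assms] by simp
qed

lemma normalize_monic: "lead_coeff (p::'a::field_gcd poly) = 1 \<Longrightarrow> normalize p = p"
  by (simp add: normalize_poly_eq_map_poly)

lemma mod_mult_add_mod_eq:
  "((x mod f) * a + (y mod f) * b) mod (f::'a::field_gcd poly) = (x * a + y * b) mod f"
proof -
  have "((x mod f) * a + (y mod f) * b) mod f = ((x mod f) * a mod f + (y mod f) * b mod f) mod f"
    by (rule mod_add_eq[symmetric])
  also have "\<dots> = (x * a + y * b) mod f"
    by (simp only: mod_mult_left_eq mod_add_eq)
  finally show ?thesis .
qed

lemma mem_code2_iff:
  fixes f g1 g2 g3 :: "'a::field_gcd poly"
  shows "(a, b) \<in> code2 f g1 g2 g3 \<longleftrightarrow>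
           (\<exists>u v. a = u * g1 mod f \<and> b = (u * g2 + v * g3) mod f)"
proof
  assume "\<exists>u v. a = u * g1 mod f \<and> b = (u * g2 + v * g3) mod f"
  then obtain u v where "a = u * g1 mod f" "b = (u * g2 + v * g3) mod f"
    by blast
  then have "a = (u mod f) * g1 mod f" "b = ((u mod f) * g2 + (v mod f) * g3) mod f"
    by (simp_all add: mod_mult_add_mod_eq mod_mult_left_eq)
  moreover have "u mod f \<in> A_elems f" "v mod f \<in> A_elems f"
    by (simp_all add: A_elems_def)
  ultimately show "(a, b) \<in> code2 f g1 g2 g3"
    unfolding code2_def by blast
qed (auto simp: code2_def)

lemma code2_pairing:
  fixes f :: "'a::field_gcd poly"
  shows "(a * (u * g1 mod f) + b * ((u * g2 + v * g3) mod f)) mod f =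
           (u * (a * g1 + b * g2) + v * (b * g3)) mod f"
proof -
  have "u * (a * g1 + b * g2) + v * (b * g3) = (u * g1) * a + (u * g2 + v * g3) * b"
    by (simp add: algebra_simps)
  then show ?thesis
    using mod_mult_add_mod_eq[of "u * g1" f a "u * g2 + v * g3" b] by (simp only: mult.commute)
qed

lemma dvd_all_combinations_iff:
  fixes f x y :: "'a::comm_semiring_1"
  shows "(\<forall>u v. f dvd u * x + v * y) \<longleftrightarrow> f dvd x \<and> f dvd y"
proof
  assume "\<forall>u v. f dvd u * x + v * y"
  from this[rule_format, of 1 0] this[rule_format, of 0 1] show "f dvd x \<and> f dvd y"
    by simp_all
qed simp

lemma mem_dual2_code2_iff:
  fixes f g1 g2 g3 :: "'a::field_gcd poly"
  shows "(a, b) \<in> dual2 f (code2 f g1 g2 g3) \<longleftrightarrow>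
           a mod f = a \<and> b mod f = b \<and> f dvd a * g1 + b * g2 \<and> f dvd b * g3"
proof -
  have "(\<forall>(c1, c2) \<in> code2 f g1 g2 g3. (a * c1 + b * c2) mod f = 0) \<longleftrightarrow>
          (\<forall>u v. f dvd u * (a * g1 + b * g2) + v * (b * g3))"
  proof
    assume orth: "\<forall>(c1, c2) \<in> code2 f g1 g2 g3. (a * c1 + b * c2) mod f = 0"
    show "\<forall>u v. f dvd u * (a * g1 + b * g2) + v * (b * g3)"
    proof (intro allI)
      fix u v
      have "(u * g1 mod f, (u * g2 + v * g3) mod f) \<in> code2 f g1 g2 g3"
        unfolding mem_code2_iff by blast
      with orth show "f dvd u * (a * g1 + b * g2) + v * (b * g3)"
        by (auto simp: code2_pairing dvd_eq_mod_eq_0)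
    qed
  qed (auto simp: mem_code2_iff code2_pairing dvd_eq_mod_eq_0)
  also have "\<dots> \<longleftrightarrow> f dvd a * g1 + b * g2 \<and> f dvd b * g3"
    by (rule dvd_all_combinations_iff)
  finally show ?thesis
    by (auto simp: dual2_def A_elems_def)
qed

lemma code2_subset_dual2_iff:
  fixes f g1 g2 g3 :: "'a::field_gcd poly"
  shows "code2 f g1 g2 g3 \<subseteq> dual2 f (code2 f g1 g2 g3) \<longleftrightarrow>
           f dvd g1 ^ 2 + g2 ^ 2 \<and> f dvd g2 * g3 \<and> f dvd g3 ^ 2"
proof -
  have "(c1, c2) \<in> dual2 f (code2 f g1 g2 g3) \<longleftrightarrow>
          f dvd u * (g1 ^ 2 + g2 ^ 2) + v * (g2 * g3) \<and> f dvd u * (g2 * g3) + v * g3 ^ 2"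
    if "c1 = u * g1 mod f" "c2 = (u * g2 + v * g3) mod f" for c1 c2 u v
    using that code2_pairing[of g1 u g1 f g2 g2 v g3] code2_pairing[of 0 u g1 f g3 g2 v g3]
    by (simp add: mem_dual2_code2_iff dvd_eq_mod_eq_0 power2_eq_square mult.commute)
  then have "code2 f g1 g2 g3 \<subseteq> dual2 f (code2 f g1 g2 g3) \<longleftrightarrow>
          (\<forall>u v. f dvd u * (g1 ^ 2 + g2 ^ 2) + v * (g2 * g3) \<and> f dvd u * (g2 * g3) + v * g3 ^ 2)"
    unfolding subset_iff by (force simp: mem_code2_iff)
  also have "\<dots> \<longleftrightarrow> (\<forall>u v. f dvd u * (g1 ^ 2 + g2 ^ 2) + v * (g2 * g3)) \<and>
                    (\<forall>u v. f dvd u * (g2 * g3) + v * g3 ^ 2)"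
    by blast
  finally show ?thesis
    unfolding dvd_all_combinations_iff by blast
qed

lemma code2_fst_dvd:
  fixes f g1 g2 g3 :: "'a::field_gcd poly"
  assumes "(a, b) \<in> code2 f g1 g2 g3" "g1 dvd f"
  shows "g1 dvd a"
  using assms by (auto simp: mem_code2_iff dvd_mod_iff)

lemma code2_zero_fst_dvd:
  fixes f g1 g2 g3 :: "'a::field_gcd poly"
  assumes "(0, b) \<in> code2 f g1 g2 g3" "g1 dvd f" "g1 \<noteq> 0" "g3 dvd f"
    and "g3 dvd (f div g1) * g2"
  shows "g3 dvd b"
proof -
  obtain u v where u: "0 = u * g1 mod f" and b: "b = (u * g2 + v * g3) mod f"
    using assms(1) unfolding mem_code2_iff by blast
  have "(f div g1) * g1 dvd u * g1"
    using u[symmetric] assms(2) by (simp add: dvd_eq_mod_eq_0)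
  then have "f div g1 dvd u"
    using assms(3) by simp
  then obtain w where "u = (f div g1) * w" ..
  then have u_g2: "u * g2 = w * ((f div g1) * g2)"
    by (simp add: ac_simps)
  have "g3 dvd u * g2"
    unfolding u_g2 using assms(5) by (rule dvd_mult)
  then have "g3 dvd u * g2 + v * g3"
    by simp
  then show ?thesis
    using b assms(4) by (simp add: dvd_mod_iff)
qed

lemma dual2_subset_code2_fst_dvd:
  fixes f g1 g2 g3 :: "'a::field_gcd poly"
  assumes "dual2 f (code2 f g1 g2 g3) \<subseteq> code2 f g1 g2 g3" "g1 dvd f"
    and "f dvd a * g1 + b * g2" "f dvd b * g3"
  shows "g1 dvd a"
proof -
  have "(a mod f, b mod f) \<in> dual2 f (code2 f g1 g2 g3)"
    using assms(3,4) by (simp add: mem_dual2_code2_iff dvd_eq_mod_eq_0 mod_mult_add_mod_eq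
        mod_mult_left_eq)
  then have "(a mod f, b mod f) \<in> code2 f g1 g2 g3"
    using assms(1) by blast
  then have "g1 dvd a mod f"
    using assms(2) by (rule code2_fst_dvd)
  then show ?thesis
    using assms(2) by (simp add: dvd_mod_iff)
qed

lemma dual2_subset_code2_snd_dvd:
  fixes f g1 g2 g3 :: "'a::field_gcd poly"
  assumes "dual2 f (code2 f g1 g2 g3) \<subseteq> code2 f g1 g2 g3"
    and "g1 dvd f" "g1 \<noteq> 0" "g3 dvd f" "g3 dvd (f div g1) * g2"
    and "f dvd b * g2" "f dvd b * g3"
  shows "g3 dvd b"
proof -
  have "(0, b mod f) \<in> dual2 f (code2 f g1 g2 g3)"
    using assms(6,7) by (simp add: mem_dual2_code2_iff dvd_eq_mod_eq_0 mod_mult_left_eq)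
  then have "(0, b mod f) \<in> code2 f g1 g2 g3"
    using assms(1) by blast
  then have "g3 dvd b mod f"
    using assms(2-5) by (rule code2_zero_fst_dvd)
  then show ?thesis
    using assms(4) by (simp add: dvd_mod_iff)
qed

lemma dual2_subset_code2I:
  fixes f g1 g2 g3 f' m :: "'a::field_gcd poly"
  assumes "f \<noteq> 0" "f = g1 ^ 2 * f'" "g3 = g1 * f'" "g2 = g1 * m" "f' dvd 1 + m ^ 2"
  shows "dual2 f (code2 f g1 g2 g3) \<subseteq> code2 f g1 g2 g3"
proof clarify
  fix a b
  assume "(a, b) \<in> dual2 f (code2 f g1 g2 g3)"
  then have red: "a mod f = a" "b mod f = b" and orth: "f dvd a * g1 + b * g2" "f dvd b * g3"
    by (simp_all add: mem_dual2_code2_iff)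
  have g1: "g1 \<noteq> 0" and f': "f' \<noteq> 0"
    using assms(1,2) by auto
  have "g1 * (g1 * f') dvd b * (g1 * f')"
    using orth(2) assms(2,3) by (simp add: power2_eq_square mult.assoc)
  then obtain b1 where b1: "b = g1 * b1"
    using g1 f' by (auto elim: dvdE)
  have "(g1 * f') * g1 dvd (a + g1 * b1 * m) * g1"
    using orth(1) assms(2,4) b1 by (simp add: power2_eq_square algebra_simps)
  then have a_b1: "g1 * f' dvd a + g1 * b1 * m"
    using g1 by simp
  then have "g1 dvd a + g1 * b1 * m"
    by (rule dvd_mult_left)
  then obtain a1 where a1: "a = g1 * a1"
    by (auto simp: dvd_add_left_iff mult.assoc elim: dvdE)
  have "g1 * f' dvd g1 * (a1 + b1 * m)"
    using a_b1 a1 by (simp add: algebra_simps)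
  then obtain r where r: "a1 + b1 * m = f' * r"
    using g1 by (auto elim: dvdE)
  obtain w where w: "1 + m ^ 2 = f' * w"
    using assms(5) ..
  \<comment> \<open>\<open>(a, b) = a1 (g1, g2) + v (0, g3)\<close>\<close>
  define v where "v = b1 * w - m * r"
  have "b1 = b1 * (1 + m ^ 2) - m * (a1 + b1 * m) + a1 * m"
    by (simp add: power2_eq_square algebra_simps)
  also have "\<dots> = f' * v + a1 * m"
    unfolding w r v_def by (simp add: algebra_simps)
  finally have "b = a1 * g2 + v * g3"
    using b1 assms(3,4) by (simp add: algebra_simps)
  then show "(a, b) \<in> code2 f g1 g2 g3"
    unfolding mem_code2_iff using red a1 by (metis mult.commute)
qed

lemma self_dual_code2I:
  fixes f g1 g2 g3 f' m :: "'a::field_gcd poly"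
  assumes "f \<noteq> 0" "f = g1 ^ 2 * f'" "g3 = g1 * f'" "g2 = g1 * m" "f' dvd 1 + m ^ 2"
  shows "code2 f g1 g2 g3 = dual2 f (code2 f g1 g2 g3)"
proof
  have "g1 ^ 2 + g2 ^ 2 = g1 ^ 2 * (1 + m ^ 2)" "g2 * g3 = f * m" "g3 ^ 2 = f * f'"
    using assms(2-4) by (simp_all add: power2_eq_square algebra_simps)
  then show "code2 f g1 g2 g3 \<subseteq> dual2 f (code2 f g1 g2 g3)"
    unfolding code2_subset_dual2_iff using assms(2,5) by (simp add: mult_dvd_mono)
qed (rule dual2_subset_code2I[OF assms])

lemma coprime_cofactor_split:
  fixes g1 g2 g3 f' m e :: "'a::field_gcd poly"
  assumes "g1 \<noteq> 0" "g3 \<noteq> 0" "f' \<noteq> 0"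
    and e: "g1 ^ 2 * f' = g3 * e" and f'_g2: "f' * g2 = g3 * m"
    and "g1 ^ 2 * f' dvd g1 ^ 2 + g2 ^ 2" "g1 ^ 2 * f' dvd g2 * g3"
  obtains t where "coprime f' m" "g3 = f' * t" "g2 = t * m"
proof -
  have "g3 * (e * g2) = g1 ^ 2 * (f' * g2)"
    using e by (simp add: mult.assoc)
  then have "g3 * (e * g2) = g3 * (g1 ^ 2 * m)"
    using f'_g2 by (simp add: ac_simps)
  then have e_g2: "e * g2 = g1 ^ 2 * m"
    using assms(2) by simp
  obtain q where "g2 * g3 = g1 ^ 2 * f' * q"
    using assms(7) ..
  then have "g3 * g2 = g3 * (e * q)"
    using e by (simp add: ac_simps)
  then have "g2 = e * q"
    using assms(2) by simp
  then have "g2 ^ 2 = (e * q) * g2"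
    unfolding power2_eq_square by (rule arg_cong[where f = "\<lambda>x. x * g2"])
  also have "\<dots> = g1 ^ 2 * (m * q)"
    by (simp add: mult.commute mult.left_commute e_g2 flip: mult.assoc)
  finally have "g1 ^ 2 * f' dvd g1 ^ 2 * (1 + m * q)"
    using assms(6) by (simp add: distrib_left)
  then have f'_dvd: "f' dvd 1 + m * q"
    using assms(1) by simp
  have coprime: "coprime f' m"
  proof (rule coprimeI)
    fix c
    assume "c dvd f'" "c dvd m"
    then have "c dvd 1 + m * q" "c dvd m * q"
      using f'_dvd by (auto intro: dvd_trans)
    then show "is_unit c"
      by (simp add: dvd_add_left_iff)
  qed
  have "f' dvd g3 * m"
    by (simp flip: f'_g2)
  then have "f' dvd g3"
    using coprime by (simp add: coprime_dvd_mult_left_iff)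
  then obtain t where t: "g3 = f' * t" ..
  have "g2 = t * m"
    using f'_g2 assms(3) by (simp add: t mult.assoc)
  with coprime t show ?thesis
    by (rule that)
qed

lemma monic_eq_if_square_dvd_CHAR_2:
  fixes t g m f' :: "'a::field_gcd poly"
  assumes "CHAR('a) = 2" "lead_coeff t = 1" "lead_coeff g = 1" "coprime m f'"
    and "t ^ 2 dvd g ^ 2" "g ^ 2 dvd t ^ 2 * m" "g ^ 2 dvd t ^ 2 * f'"
  shows "t = g"
proof -
  have "g ^ 2 dvd gcd (t ^ 2 * m) (t ^ 2 * f')"
    using assms(6,7) by simp
  also have "\<dots> = t ^ 2"
    using assms(2,4) by (simp add: gcd_mult_left normalize_monic lead_coeff_power)
  finally have "g ^ 2 = t ^ 2"
    using assms(5) by (rule associated_eqI) (simp_all add: assms(2,3) normalize_monic lead_coeff_power)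
  moreover have char2: "CHAR('a poly) = 2"
    using assms(1) by simp
  ultimately have "(t + g) ^ 2 = 0"
    by (simp add: square_add_CHAR_2[OF char2] add_self_CHAR_2[OF char2])
  then have "t = - g"
    by (simp add: add_eq_0_iff)
  then show ?thesis
    using uminus_CHAR_2[OF char2] by simp
qed

lemma self_dual_code2_cofactor:
  fixes f g1 g2 g3 :: "'a::field_gcd poly"
  assumes "CHAR('a) = 2" "g1 \<noteq> 0" "g3 \<noteq> 0" "g1 dvd f" "g3 dvd f" "g3 dvd (f div g1) * g2"
    and sub: "dual2 f (code2 f g1 g2 g3) \<subseteq> code2 f g1 g2 g3"
  obtains f' m where "f = g1 ^ 2 * f'" "f' * g2 = g3 * m"
proof -
  have "g1 dvd f div g1"
    using sub assms(4) by (rule dual2_subset_code2_fst_dvd[where b = 0]) (simp_all add: assms(4))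
  then obtain f' where f': "f div g1 = g1 * f'" ..
  have "f = f div g1 * g1"
    using assms(4) by simp
  with f' have f: "f = g1 ^ 2 * f'"
    by (simp add: power2_eq_square ac_simps)
  obtain k where k: "g1 * f' * g2 = g3 * k"
    using assms(6) unfolding f' ..
  obtain e where e: "f = g3 * e"
    using assms(5) ..
  have "g3 * (e * g2) = f * g2"
    using e by (simp add: mult.assoc)
  also have "\<dots> = g1 * (g1 * f' * g2)"
    using f by (simp add: power2_eq_square ac_simps)
  also have "\<dots> = g3 * (g1 * k)"
    unfolding k by (simp add: ac_simps)
  finally have e_g2: "e * g2 = g1 * k"
    using assms(3) by simp
  have "g1 dvd k"
    using sub assms(4)
  proof (rule dual2_subset_code2_fst_dvd[where b = e])
    \<comment> \<open>This is where characteristic 2 enters: \<open>k g1 + e g2 = 2 g1 k\<close>.\<close>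
    have "CHAR('a poly) = 2"
      using assms(1) by simp
    then show "f dvd k * g1 + e * g2"
      by (simp add: e_g2 mult.commute add_self_CHAR_2)
    show "f dvd e * g3"
      using e by (simp add: mult.commute)
  qed
  then obtain m where "k = g1 * m" ..
  with k have "g1 * (f' * g2) = g1 * (g3 * m)"
    by (simp add: ac_simps)
  then have "f' * g2 = g3 * m"
    using assms(2) by simp
  with f show ?thesis
    by (rule that)
qed

lemma dual2_subset_code2_cofactor_dvd:
  fixes f g1 g2 g3 f' t m :: "'a::field_gcd poly"
  assumes "dual2 f (code2 f g1 g2 g3) \<subseteq> code2 f g1 g2 g3"
    and "g1 dvd f" "g1 \<noteq> 0" "g3 dvd f" "g3 dvd (f div g1) * g2"
    and t: "g3 = f' * t" "g2 = t * m"
  shows "t * g3 dvd f"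
proof -
  have "t dvd f"
    using t(1) assms(4) by (auto intro: dvd_trans)
  then have f_t: "t * (f div t) = f"
    by simp
  have "g3 dvd f div t"
    using assms(1-5)
  proof (rule dual2_subset_code2_snd_dvd)
    show "f dvd f div t * g2" "f dvd f div t * g3"
      using f_t by (simp_all add: t ac_simps)
  qed
  then have "t * g3 dvd t * (f div t)"
    by (rule mult_dvd_mono[OF dvd_refl])
  then show ?thesis
    by (simp only: f_t)
qed

lemma self_dual_code2D:
  fixes f g1 g2 g3 :: "'a::field_gcd poly"
  assumes char2: "CHAR('a) = 2"
    and "lead_coeff f = 1" "lead_coeff g1 = 1" "g1 dvd f" "lead_coeff g3 = 1" "g3 dvd f"
    and "g3 dvd (f div g1) * g2"
    and self_dual: "code2 f g1 g2 g3 = dual2 f (code2 f g1 g2 g3)"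
  obtains f' m where "f = g1 ^ 2 * f'" "g3 = g1 * f'" "g2 = g1 * m" "f' dvd 1 + m ^ 2"
proof -
  have g1: "g1 \<noteq> 0" and g3: "g3 \<noteq> 0"
    using assms(3,5) by auto
  have sub: "dual2 f (code2 f g1 g2 g3) \<subseteq> code2 f g1 g2 g3"
    using self_dual by simp
  have orth: "f dvd g1 ^ 2 + g2 ^ 2" "f dvd g2 * g3" "f dvd g3 ^ 2"
    using self_dual code2_subset_dual2_iff[of f g1 g2 g3] by simp_all
  obtain f' m where f: "f = g1 ^ 2 * f'" and f'_g2: "f' * g2 = g3 * m"
    using self_dual_code2_cofactor[OF char2 g1 g3 assms(4,6,7) sub] .
  have f': "lead_coeff f' = 1" "f' \<noteq> 0"
    using f assms(2,3) by (auto simp: lead_coeff_mult lead_coeff_power)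
  obtain e where "f = g3 * e"
    using assms(6) ..
  then have "g1 ^ 2 * f' = g3 * e"
    using f by simp
  then obtain t where coprime: "coprime f' m" and t: "g3 = f' * t" "g2 = t * m"
    using coprime_cofactor_split[OF g1 g3 f'(2) _ f'_g2] orth(1,2)[unfolded f] by blast
  have t_monic: "lead_coeff t = 1"
    using assms(5) f'(1) t(1) by (simp add: lead_coeff_mult)
  have "t * g3 dvd f"
    using sub assms(4) g1 assms(6,7) t by (rule dual2_subset_code2_cofactor_dvd)
  then have "f' * t ^ 2 dvd f' * g1 ^ 2"
    using f t(1) by (simp add: power2_eq_square ac_simps)
  moreover have "f' * g1 ^ 2 dvd f' * (t ^ 2 * m)" "f' * g1 ^ 2 dvd f' * (t ^ 2 * f')"
    using orth(2,3) f t by (simp_all add: power2_eq_square ac_simps)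
  ultimately have "t = g1"
    using f'(2) coprime t_monic assms(3) char2
    by (intro monic_eq_if_square_dvd_CHAR_2[where m = m and f' = f']) (simp_all add: coprime_commute)
  moreover have "g1 ^ 2 * f' dvd g1 ^ 2 * (1 + m ^ 2)"
    using orth(1) f t \<open>t = g1\<close> by (simp add: power2_eq_square algebra_simps)
  ultimately show ?thesis
    using f t g1 by (intro that[of f' m]) (simp_all add: mult.commute)
qed

lemma self_dual_code2_iff:
  fixes f g1 g2 g3 :: "'a::field_gcd poly"
  assumes "CHAR('a) = 2"
    and "lead_coeff f = 1" "lead_coeff g1 = 1" "g1 dvd f" "lead_coeff g3 = 1" "g3 dvd f"
    and "g3 dvd (f div g1) * g2"
  shows "code2 f g1 g2 g3 = dual2 f (code2 f g1 g2 g3) \<longleftrightarrow>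
           (\<exists>f' m. f = g1 ^ 2 * f' \<and> g3 = g1 * f' \<and> g2 = g1 * m \<and> f' dvd 1 + m ^ 2)"
proof
  assume "code2 f g1 g2 g3 = dual2 f (code2 f g1 g2 g3)"
  then show "\<exists>f' m. f = g1 ^ 2 * f' \<and> g3 = g1 * f' \<and> g2 = g1 * m \<and> f' dvd 1 + m ^ 2"
    by (elim self_dual_code2D[OF assms]) blast
next
  have "f \<noteq> 0"
    using assms(2) by auto
  then show "\<exists>f' m. f = g1 ^ 2 * f' \<and> g3 = g1 * f' \<and> g2 = g1 * m \<and> f' dvd 1 + m ^ 2 \<Longrightarrow>
             code2 f g1 g2 g3 = dual2 f (code2 f g1 g2 g3)"
    using self_dual_code2I by blast
qed

lemma sqrt2_nonzero [simp]: "sqrt2 (f::'a::field_gcd poly) \<noteq> 0"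
  unfolding sqrt2_def by (auto simp: in_prime_factors_iff)

lemma multiplicity_sqrt2:
  fixes f p :: "'a::field_gcd poly"
  assumes "prime p"
  shows "multiplicity p (sqrt2 f) =
           (if p \<in> prime_factors f then (multiplicity p f + 1) div 2 else 0)"
  unfolding sqrt2_def
  by (rule multiplicity_prod_prime_powers) (auto simp: assms in_prime_factors_iff)

lemma dvd_square_iff_sqrt2_dvd:
  fixes f q :: "'a::field_gcd poly"
  assumes "f \<noteq> 0"
  shows "f dvd q ^ 2 \<longleftrightarrow> sqrt2 f dvd q"
proof
  assume f_dvd: "f dvd q ^ 2"
  show "sqrt2 f dvd q"
  proof (cases "q = 0")
    case False
    show ?thesis
    proof (rule multiplicity_le_imp_dvd[OF sqrt2_nonzero])
      fix p :: "'a poly"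
      assume p: "prime p"
      have "multiplicity p f \<le> multiplicity p (q ^ 2)"
        using assms False f_dvd by (intro dvd_imp_multiplicity_le) auto
      also have "\<dots> = 2 * multiplicity p q"
        using p False by (simp add: prime_elem_multiplicity_power_distrib)
      finally show "multiplicity p (sqrt2 f) \<le> multiplicity p q"
        using p by (simp add: multiplicity_sqrt2) presburger
    qed
  qed simp
next
  have "f dvd sqrt2 f ^ 2"
  proof (rule multiplicity_le_imp_dvd[OF assms])
    fix p :: "'a poly"
    assume p: "prime p"
    show "multiplicity p f \<le> multiplicity p (sqrt2 f ^ 2)"
    proof (cases "p \<in> prime_factors f")
      case True
      then show ?thesis
        using p by (simp add: prime_elem_multiplicity_power_distrib multiplicity_sqrt2)
    next
      case False
      then have "\<not> p dvd f"
        using p assms by (simp add: in_prime_factors_iff)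
      then show ?thesis
        by (simp add: not_dvd_imp_multiplicity_0)
    qed
  qed
  moreover assume "sqrt2 f dvd q"
  ultimately show "f dvd q ^ 2"
    using dvd_power_same dvd_trans by blast
qed

lemma dvd_one_plus_square_iff_CHAR_2:
  fixes f m :: "'a::field_gcd poly"
  assumes "CHAR('a) = 2" "f \<noteq> 0"
  shows "f dvd 1 + m ^ 2 \<longleftrightarrow> (\<exists>h. m = h * sqrt2 f + 1)"
proof -
  have char2: "CHAR('a poly) = 2"
    using assms(1) by simp
  have "f dvd 1 + m ^ 2 \<longleftrightarrow> f dvd (m + 1) ^ 2"
    by (simp add: square_add_CHAR_2[OF char2] add.commute)
  also have "\<dots> \<longleftrightarrow> sqrt2 f dvd m + 1"
    using assms(2) by (rule dvd_square_iff_sqrt2_dvd)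
  also have "\<dots> \<longleftrightarrow> (\<exists>h. m + 1 = h * sqrt2 f)"
    by (auto simp: dvd_def mult.commute)
  also have "\<dots> \<longleftrightarrow> (\<exists>h. m = h * sqrt2 f + 1)"
    using add_self_CHAR_2[OF char2, of 1] by (metis add.assoc add_0_right)
  finally show ?thesis .
qed

lemma degree_factor_lt_diff:
  fixes h s m :: "'a::field poly"
  assumes "m = h * s + 1" "s \<noteq> 0" "degree m < n"
  shows "h = 0 \<or> degree h < n - degree s"
proof (cases "h = 0")
  case False
  have "degree (h * s) \<le> degree m"
    using degree_diff_le_max[of m 1] assms(1) by simp
  with False assms(2,3) show ?thesis
    by (simp add: degree_mult_eq)
qed simp

lemma cofactor_form_iff_sqrt2_form:
  fixes f g1 g2 g3 :: "'a::field_gcd poly"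
  assumes char2: "CHAR('a) = 2" and "lead_coeff f = 1" "lead_coeff g1 = 1"
    and deg_g2: "g2 = 0 \<or> degree g2 < degree g3"
  shows "(\<exists>f' m. f = g1 ^ 2 * f' \<and> g3 = g1 * f' \<and> g2 = g1 * m \<and> f' dvd 1 + m ^ 2) \<longleftrightarrow>
           (g1 = g3 \<and> g2 = 0 \<and> f = g1 ^ 2) \<or>
           (\<exists>f' h. f = g1 ^ 2 * f' \<and> g3 = g1 * f' \<and> g2 = g1 * (h * sqrt2 f' + 1) \<and>
                   (h = 0 \<or> degree h < degree f' - degree (sqrt2 f')))"
    (is "?cofactor \<longleftrightarrow> ?trivial \<or> ?sqrt2")
proof
  assume ?cofactor
  then obtain f' m where f: "f = g1 ^ 2 * f'" and g3: "g3 = g1 * f'" and g2: "g2 = g1 * m"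
    and f'_dvd: "f' dvd 1 + m ^ 2"
    by blast
  have g1: "g1 \<noteq> 0" and f': "f' \<noteq> 0" "lead_coeff f' = 1"
    using f assms(2,3) by (auto simp: lead_coeff_mult lead_coeff_power)
  show "?trivial \<or> ?sqrt2"
  proof (cases "m = 0")
    case True
    then have "f' dvd 1"
      using f'_dvd by simp
    then have "normalize f' = 1"
      by (rule is_unit_normalize)
    then have "f' = 1"
      using f'(2) by (simp add: normalize_monic)
    then show ?thesis
      using f g2 g3 True by simp
  next
    case False
    then obtain h where h: "m = h * sqrt2 f' + 1"
      using f'_dvd dvd_one_plus_square_iff_CHAR_2[OF char2 f'(1)] by blast
    have "degree m < degree f'"
      using deg_g2 g1 f' False by (simp add: g2 g3 degree_mult_eq)
    then have "h = 0 \<or> degree h < degree f' - degree (sqrt2 f')"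
      using h by (intro degree_factor_lt_diff) simp_all
    then show ?thesis
      using f g2 g3 h by blast
  qed
next
  assume "?trivial \<or> ?sqrt2"
  then show ?cofactor
  proof
    assume ?trivial
    then show ?cofactor
      by (intro exI[of _ 1] exI[of _ 0]) (simp add: power2_eq_square)
  next
    assume ?sqrt2
    then obtain f' h where "f = g1 ^ 2 * f'" "g3 = g1 * f'" "g2 = g1 * (h * sqrt2 f' + 1)"
      by blast
    moreover have "f' \<noteq> 0"
      using \<open>f = g1 ^ 2 * f'\<close> assms(2) by auto
    ultimately show ?cofactor
      using dvd_one_plus_square_iff_CHAR_2[OF char2] by blast
  qed
qed

theorem mainTheorem10:
  fixes f g1 g2 g3 :: "'a::{field_gcd,finite} poly"
  assumes char2: "CHAR('a) = 2"
    and f_monic: "lead_coeff f = 1"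
    and g1_monic: "lead_coeff g1 = 1" and g1_dvd: "g1 dvd f"
    and g3_monic: "lead_coeff g3 = 1" and g3_dvd: "g3 dvd f"
    and g3_dvd2: "g3 dvd (f div g1) * g2"
    and deg_g2: "g2 = 0 \<or> degree g2 < degree g3"
  shows "code2 f g1 g2 g3 = dual2 f (code2 f g1 g2 g3) \<longleftrightarrow>
           ((g1 = g3 \<and> g2 = 0 \<and> f = g1 ^ 2) \<or>
            (\<exists>f' h. f = g1 ^ 2 * f' \<and> g3 = g1 * f' \<and> g2 = g1 * (h * sqrt2 f' + 1) \<and>
                    (h = 0 \<or> degree h < degree f' - degree (sqrt2 f'))))"
  using self_dual_code2_iff[OF char2 f_monic g1_monic g1_dvd g3_monic g3_dvd g3_dvd2]
    cofactor_form_iff_sqrt2_form[OF char2 f_monic g1_monic deg_g2]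
  by simp

end
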